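(* Consider the following game with $n$ players partitioned (unknown to the good players) into a set $G$ of $n-f$ good players and a set $B$ of $f=n/(3+\epsilon)$ bad players, for some small $\epsilon>0$, played for up to $T$ iterations. In iteration $t$: the adversary privately picks $\sigma(t)\in\{-1,1\}$; each good player $i\in G$ picks $X_i(t)\in\{-1,1\}$ uniformly at random, independently; the bad players see these values and then choose $X_i(t)\in\{-1,1\}$ for $i\in B$ arbitrarily; if $\mathrm{sgn}(\sum_{i\in[n]}X_i(t))=\sigma(t)$ the game continues to iteration $t+1$, otherwise it ends. Let $T=\tilde{\Theta}((n/\epsilon)^2)$. Then, with high probability, if the game does not end within $T$ iterations, the pair $(i,j)\in[n]^2$ with $i\neq j$ maximizing $\langle X_i,X_j\rangle=\sum_{t=1}^T X_i(t)X_j(t)$ satisfies $B\cap\{i,j\}\neq\emptyset$.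
   Context: $\mathrm{sgn}(x)=1$ if $x\ge 0$ and $-1$ if $x<0$. "With high probability" means with probability $1-n^{-\Omega(1)}$ (arbitrarily large polynomial). *)

theory Defs
  imports "HOL-Probability.Probability"
begin

definition sgnp :: "int \<Rightarrow> int" where
  "sgnp x = (if x \<ge> 0 then 1 else -1)"

text \<open>The bits of good players are their
  uniformly random choices; the bits at indices of bad players are unused by the
  game itself but may serve as private randomness of the adversary.\<close>
definition Omega :: "nat \<Rightarrow> nat \<Rightarrow> (nat \<Rightarrow> nat \<Rightarrow> int) set" where
  "Omega n T = {\<omega>. (\<forall>t i. t < T \<and> i < n \<longrightarrow> \<omega> t i \<in> {-1, 1}) \<and>
                    (\<forall>t i. \<not> (t < T \<and> i < n) \<longrightarrow> \<omega> t i = 0)}"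

text \<open>Admissible adversary: sig (the adversary's private target sign) at round t
  depends only on what happened before round t; the bad players' values at round t
  may additionally depend on the good players' values of round t.\<close>
definition admissible_adversary ::
  "nat \<Rightarrow> nat set \<Rightarrow> ((nat \<Rightarrow> nat \<Rightarrow> int) \<Rightarrow> nat \<Rightarrow> int)
     \<Rightarrow> ((nat \<Rightarrow> nat \<Rightarrow> int) \<Rightarrow> nat \<Rightarrow> nat \<Rightarrow> int) \<Rightarrow> bool" where
  "admissible_adversary n B sig badX \<longleftrightarrow>
     (\<forall>\<omega> t. sig \<omega> t \<in> {-1, 1}) \<and>
     (\<forall>\<omega> t i. badX \<omega> t i \<in> {-1, 1}) \<and>
     (\<forall>\<omega> \<omega>' t. (\<forall>s<t. \<forall>i. \<omega> s i = \<omega>' s i) \<longrightarrow> sig \<omega> t = sig \<omega>' t) \<and>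
     (\<forall>\<omega> \<omega>' t i. (\<forall>s<t. \<forall>k. \<omega> s k = \<omega>' s k) \<and>
                  (\<forall>k\<in>{..<n} - B. \<omega> t k = \<omega>' t k)
                  \<longrightarrow> badX \<omega> t i = badX \<omega>' t i)"

definition play ::
  "nat set \<Rightarrow> ((nat \<Rightarrow> nat \<Rightarrow> int) \<Rightarrow> nat \<Rightarrow> nat \<Rightarrow> int) \<Rightarrow> (nat \<Rightarrow> nat \<Rightarrow> int)
     \<Rightarrow> nat \<Rightarrow> nat \<Rightarrow> int" where
  "play B badX \<omega> t i = (if i \<in> B then badX \<omega> t i else \<omega> t i)"

definition survives ::
  "nat \<Rightarrow> nat \<Rightarrow> nat set \<Rightarrow> ((nat \<Rightarrow> nat \<Rightarrow> int) \<Rightarrow> nat \<Rightarrow> int)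
     \<Rightarrow> ((nat \<Rightarrow> nat \<Rightarrow> int) \<Rightarrow> nat \<Rightarrow> nat \<Rightarrow> int) \<Rightarrow> (nat \<Rightarrow> nat \<Rightarrow> int) \<Rightarrow> bool" where
  "survives n T B sig badX \<omega> \<longleftrightarrow>
     (\<forall>t<T. sgnp (\<Sum>i<n. play B badX \<omega> t i) = sig \<omega> t)"

definition ip ::
  "nat \<Rightarrow> nat set \<Rightarrow> ((nat \<Rightarrow> nat \<Rightarrow> int) \<Rightarrow> nat \<Rightarrow> nat \<Rightarrow> int) \<Rightarrow> (nat \<Rightarrow> nat \<Rightarrow> int)
     \<Rightarrow> nat \<Rightarrow> nat \<Rightarrow> int" where
  "ip T B badX \<omega> i j = (\<Sum>t<T. play B badX \<omega> t i * play B badX \<omega> t j)"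

end

theory Submission
  imports Defs
begin

(* Let f = |B| and g = n - f.  Multiplying the good bits of round t by the target sign sig(t) is
  a bijection of the sample space, because sig(t) only depends on earlier rounds; so the aligned
  good bits are again uniform.  For the sum S of the aligned good bits of a round put
  deficit S = 2 S^2 if S < 0 and 0 otherwise: its mean is g, since E[S^2] = g and
  E[sgn(S) S^2] = 0 by symmetry.  If round t survives, i.e. sgn(G_t + R_t) = sig(t) for the sums
  G_t and R_t of the good and the bad bits, then deficit (sig(t) G_t) <= 2 R_t^2.  Summed over
  the rounds, sum_t R_t^2 = sum_{k,l in B} <X_k, X_l> <= f T + f (f - 1) M, where M is the
  largest inner product of two distinct players.  If M is attained by two good players, then
  either their inner product, a sum of T independent fair signs, exceeds
  D = sqrt (2 T (c + 3) ln n), or the total deficit is at most 2 (f T + f (f - 1) D), which is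
  far below its mean g T because g - 2 f = n - 3 f = eps n / (3 + eps).  Hoeffding's inequality
  bounds each of these events by n^-(c+3), and a union bound over the n^2 pairs concludes. *)

lemma Hoeffding_Pi_pmf:
  fixes h :: "'b \<Rightarrow> real" and D :: "'b pmf" and d :: 'b and T :: nat
  assumes "T > 0" and "a < b" and range: "\<And>v. v \<in> set_pmf D \<Longrightarrow> h v \<in> {a..b}" and "x \<ge> 0"
  shows Hoeffding_Pi_pmf_le:
      "measure_pmf.prob (Pi_pmf {..<T} d (\<lambda>_. D))
         {\<omega>. (\<Sum>t<T. h (\<omega> t)) \<le> real T * measure_pmf.expectation D h - x}
       \<le> exp (-2 * x\<^sup>2 / (real T * (b - a)\<^sup>2))"
    and Hoeffding_Pi_pmf_ge:
      "measure_pmf.prob (Pi_pmf {..<T} d (\<lambda>_. D))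
         {\<omega>. (\<Sum>t<T. h (\<omega> t)) \<ge> real T * measure_pmf.expectation D h + x}
       \<le> exp (-2 * x\<^sup>2 / (real T * (b - a)\<^sup>2))"
proof -
  let ?P = "Pi_pmf {..<T} d (\<lambda>_. D)"
  have expectation_component: "measure_pmf.expectation ?P (\<lambda>\<omega>. h (\<omega> t)) = measure_pmf.expectation D h"
    if "t < T" for t
  proof -
    have "map_pmf (\<lambda>\<omega>. \<omega> t) ?P = D"
      using that by (subst Pi_pmf_component) simp_all
    then show ?thesis
      by (metis integral_map_pmf)
  qed
  interpret Hoeffding_ineq "measure_pmf ?P" "{..<T}" "\<lambda>t \<omega>. h (\<omega> t)" "\<lambda>_. a" "\<lambda>_. b"
    "real T * measure_pmf.expectation D h"
  proof unfold_locales
    show "prob_space.indep_vars ?P (\<lambda>_. borel) (\<lambda>t \<omega>. h (\<omega> t)) {..<T}"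
      by (intro prob_space.indep_vars_compose2[OF _ indep_vars_Pi_pmf])
         (auto simp: measure_pmf.prob_space_axioms)
    show "AE \<omega> in ?P. h (\<omega> t) \<in> {a..b}" if "t \<in> {..<T}" for t
      using that range by (intro AE_pmfI) (auto simp: set_Pi_pmf PiE_dflt_def)
  qed (simp_all add: expectation_component)
  have "(\<Sum>t<T. (b - a)\<^sup>2) > 0"
    using assms by (intro sum_pos) auto
  then show "measure_pmf.prob ?P {\<omega>. (\<Sum>t<T. h (\<omega> t)) \<le> real T * measure_pmf.expectation D h - x}
             \<le> exp (-2 * x\<^sup>2 / (real T * (b - a)\<^sup>2))"
    and "measure_pmf.prob ?P {\<omega>. (\<Sum>t<T. h (\<omega> t)) \<ge> real T * measure_pmf.expectation D h + x}
             \<le> exp (-2 * x\<^sup>2 / (real T * (b - a)\<^sup>2))"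
    using Hoeffding_ineq_le[OF \<open>x \<ge> 0\<close>] Hoeffding_ineq_ge[OF \<open>x \<ge> 0\<close>] by simp_all
qed

definition sign_cube :: "nat \<Rightarrow> (nat \<Rightarrow> int) set" where
  "sign_cube n = PiE_dflt {..<n} 0 (\<lambda>_. {-1, 1})"

lemma sign_cube_values: "v \<in> sign_cube n \<Longrightarrow> i < n \<Longrightarrow> v i \<in> {-1, 1}"
  by (auto simp: sign_cube_def PiE_dflt_def)

lemma abs_sign_cube_le_1: "v \<in> sign_cube n \<Longrightarrow> \<bar>v i\<bar> \<le> 1"
  by (cases "i < n") (auto simp: sign_cube_def PiE_dflt_def)

lemma finite_sign_cube: "finite (sign_cube n)"
  unfolding sign_cube_def by (intro finite_PiE_dflt) auto

lemma sign_cube_nonempty: "sign_cube n \<noteq> {}"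
proof -
  have "(\<lambda>i. if i < n then 1 else 0) \<in> sign_cube n"
    by (auto simp: sign_cube_def PiE_dflt_def)
  then show ?thesis by auto
qed

lemma Omega_nonempty: "Omega n T \<noteq> {}"
proof -
  have "(\<lambda>t i. if t < T \<and> i < n then 1 else 0) \<in> Omega n T"
    by (auto simp: Omega_def)
  then show ?thesis by auto
qed

lemma Omega_eq_PiE_dflt: "Omega n T = PiE_dflt {..<T} (\<lambda>_. 0) (\<lambda>_. sign_cube n)"
  unfolding Omega_def sign_cube_def PiE_dflt_def by (auto simp: fun_eq_iff)

lemma finite_Omega: "finite (Omega n T)"
  unfolding Omega_eq_PiE_dflt by (intro finite_PiE_dflt) (auto simp: finite_sign_cube)

lemma pmf_of_set_Omega:
  "pmf_of_set (Omega n T) = Pi_pmf {..<T} (\<lambda>_. 0) (\<lambda>_. pmf_of_set (sign_cube n))"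
  unfolding Omega_eq_PiE_dflt
  by (subst Pi_pmf_of_set) (auto simp: finite_sign_cube sign_cube_nonempty)

lemma sum_eq_0_if_antisymmetric:
  fixes f :: "'a \<Rightarrow> 'b::linordered_idom"
  assumes "bij_betw \<psi> A A" and "\<And>v. v \<in> A \<Longrightarrow> f (\<psi> v) = - f v"
  shows "sum f A = 0"
proof -
  have "sum f A = sum (f \<circ> \<psi>) A"
    using sum.reindex_bij_betw[OF assms(1), of f] by simp
  also have "\<dots> = - sum f A"
    using assms(2) by (simp add: sum_negf)
  finally show ?thesis by simp
qed

lemma bij_betw_flip_sign_cube:
  assumes "i < n"
  shows "bij_betw (\<lambda>v. v(i := - v i)) (sign_cube n) (sign_cube n)"
proof (rule bij_betwI[where g = "\<lambda>v. v(i := - v i)"])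
  have "v(i := - v i) \<in> sign_cube n" if "v \<in> sign_cube n" for v
    using that sign_cube_values[OF that assms] assms by (auto simp: sign_cube_def PiE_dflt_def)
  then show "(\<lambda>v. v(i := - v i)) \<in> sign_cube n \<rightarrow> sign_cube n"
    and "(\<lambda>v. v(i := - v i)) \<in> sign_cube n \<rightarrow> sign_cube n"
    by auto
qed auto

lemma bij_betw_uminus_sign_cube: "bij_betw uminus (sign_cube n) (sign_cube n)"
proof (rule bij_betwI[where g = uminus])
  show "uminus \<in> sign_cube n \<rightarrow> sign_cube n"
    by (auto simp: sign_cube_def PiE_dflt_def)
qed (auto simp: sign_cube_def PiE_dflt_def)

lemma sum_sign_cube_mult_eq_0:
  assumes "i < n" "j < n" "i \<noteq> j"
  shows "(\<Sum>v\<in>sign_cube n. v i * v j) = 0"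
  by (rule sum_eq_0_if_antisymmetric[OF bij_betw_flip_sign_cube[OF assms(1)]]) (use assms in auto)

lemma sum_sign_cube_sum_sq:
  assumes "S \<subseteq> {..<n}"
  shows "(\<Sum>v\<in>sign_cube n. (\<Sum>i\<in>S. v i)\<^sup>2) = int (card S) * int (card (sign_cube n))"
proof -
  have diagonal: "(\<Sum>v\<in>sign_cube n. v i * v j) = (if i = j then int (card (sign_cube n)) else 0)"
    if "i \<in> S" "j \<in> S" for i j
  proof (cases "i = j")
    case True
    with that assms have "(\<Sum>v\<in>sign_cube n. v i * v j) = (\<Sum>v\<in>sign_cube n. 1)"
      by (intro sum.cong) (auto dest: sign_cube_values)
    with True show ?thesis by simp
  qed (use that assms in \<open>auto intro!: sum_sign_cube_mult_eq_0\<close>)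
  have "(\<Sum>v\<in>sign_cube n. (\<Sum>i\<in>S. v i)\<^sup>2) = (\<Sum>v\<in>sign_cube n. \<Sum>i\<in>S. \<Sum>j\<in>S. v i * v j)"
    by (simp add: power2_eq_square sum_product)
  also have "\<dots> = (\<Sum>i\<in>S. \<Sum>j\<in>S. \<Sum>v\<in>sign_cube n. v i * v j)"
    by (simp only: sum.swap[of _ "sign_cube n"] sum.swap[of _ "sign_cube n" S])
  also have "\<dots> = int (card S) * int (card (sign_cube n))"
    using assms by (simp add: diagonal finite_subset)
  finally show ?thesis .
qed

lemma sum_sign_cube_sgnp_mult_sum_sq:
  "(\<Sum>v\<in>sign_cube n. sgnp (\<Sum>i\<in>S. v i) * (\<Sum>i\<in>S. v i)\<^sup>2) = 0"
proof (rule sum_eq_0_if_antisymmetric[OF bij_betw_uminus_sign_cube])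
  fix v :: "nat \<Rightarrow> int"
  have "(\<Sum>i\<in>S. (- v) i) = - (\<Sum>i\<in>S. v i)"
    by (simp add: sum_negf)
  then show "sgnp (\<Sum>i\<in>S. (- v) i) * (\<Sum>i\<in>S. (- v) i)\<^sup>2 = - (sgnp (\<Sum>i\<in>S. v i) * (\<Sum>i\<in>S. v i)\<^sup>2)"
    by (simp add: sgnp_def)
qed

definition deficit :: "int \<Rightarrow> int" where
  "deficit s = (if s \<ge> 0 then 0 else 2 * s\<^sup>2)"

lemma deficit_eq_sgnp: "deficit s = s\<^sup>2 - sgnp s * s\<^sup>2"
  by (simp add: deficit_def sgnp_def)

lemma deficit_aligned_le:
  assumes "\<sigma> \<in> {-1, 1}" and "sgnp (G + R) = \<sigma>"
  shows "deficit (\<sigma> * G) \<le> 2 * R\<^sup>2"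
proof (cases "\<sigma> * G \<ge> 0")
  case False
  then have "\<bar>G\<bar> \<le> \<bar>R\<bar>"
    using assms by (auto simp: sgnp_def split: if_splits)
  then have "G\<^sup>2 \<le> R\<^sup>2"
    by (simp only: abs_le_square_iff)
  moreover have "(\<sigma> * G)\<^sup>2 = G\<^sup>2"
    using assms(1) by (auto simp: power2_eq_square)
  ultimately show ?thesis
    using False by (simp add: deficit_def)
qed (simp add: deficit_def)

lemma expectation_deficit_sign_cube:
  assumes "S \<subseteq> {..<n}"
  shows "measure_pmf.expectation (pmf_of_set (sign_cube n)) (\<lambda>v. deficit (\<Sum>i\<in>S. v i)) = card S"
proof -
  have "(\<Sum>v\<in>sign_cube n. deficit (\<Sum>i\<in>S. v i)) = int (card S) * int (card (sign_cube n))"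
    using sum_sign_cube_sum_sq[OF assms] sum_sign_cube_sgnp_mult_sum_sq[where n = n and S = S]
    by (simp add: deficit_eq_sgnp sum_subtractf)
  then have "(\<Sum>v\<in>sign_cube n. real_of_int (deficit (\<Sum>i\<in>S. v i))) = card S * card (sign_cube n)"
    unfolding of_int_sum[symmetric] by simp
  then show ?thesis
    using finite_sign_cube sign_cube_nonempty
    by (subst integral_pmf_of_set) (auto simp: card_gt_0_iff)
qed

lemma expectation_sign_cube_mult:
  assumes "i < n" "j < n" "i \<noteq> j"
  shows "measure_pmf.expectation (pmf_of_set (sign_cube n)) (\<lambda>v. v i * v j) = 0"
  using sum_sign_cube_mult_eq_0[OF assms] finite_sign_cube sign_cube_nonempty
  by (subst integral_pmf_of_set) (auto simp flip: of_int_sum of_int_mult)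

lemma deficit_sum_sign_cube_bounds:
  assumes "v \<in> sign_cube n" and "finite S"
  shows "deficit (\<Sum>i\<in>S. v i) \<in> {0 .. 2 * (int (card S))\<^sup>2}"
proof -
  have "\<bar>\<Sum>i\<in>S. v i\<bar> \<le> (\<Sum>i\<in>S. \<bar>v i\<bar>)"
    by (rule sum_abs)
  also have "\<dots> \<le> (\<Sum>i\<in>S. 1)"
    by (intro sum_mono abs_sign_cube_le_1[OF assms(1)])
  finally have "(\<Sum>i\<in>S. v i)\<^sup>2 \<le> (int (card S))\<^sup>2"
    by (simp add: abs_le_square_iff[symmetric])
  then show ?thesis
    by (simp add: deficit_def)
qed

definition align ::
  "nat set \<Rightarrow> ((nat \<Rightarrow> nat \<Rightarrow> int) \<Rightarrow> nat \<Rightarrow> int) \<Rightarrow> (nat \<Rightarrow> nat \<Rightarrow> int) \<Rightarrow> nat \<Rightarrow> nat \<Rightarrow> int" where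
  "align B sig \<omega> t i = (if i \<in> B then \<omega> t i else sig \<omega> t * \<omega> t i)"

lemma align_in_Omega:
  assumes "admissible_adversary n B sig badX" and "\<omega> \<in> Omega n T"
  shows "align B sig \<omega> \<in> Omega n T"
proof -
  have "sig \<omega> t \<in> {-1, 1}" for t
    using assms(1) by (auto simp: admissible_adversary_def)
  then show ?thesis
    using assms(2) by (fastforce simp: Omega_def align_def)
qed

lemma inj_on_align:
  assumes "admissible_adversary n B sig badX"
  shows "inj_on (align B sig) (Omega n T)"
proof (rule inj_onI)
  fix \<omega> \<omega>' assume "align B sig \<omega> = align B sig \<omega>'"
  then have same_align: "align B sig \<omega> t i = align B sig \<omega>' t i" for t i
    by simp
  have sig_values: "sig \<omega> t \<in> {-1, 1}" for t
    using assms by (auto simp: admissible_adversary_def)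
  have sig_causal: "(\<forall>s<t. \<forall>i. \<omega> s i = \<omega>' s i) \<Longrightarrow> sig \<omega> t = sig \<omega>' t" for t
    using assms unfolding admissible_adversary_def by blast
  have "\<forall>i. \<omega> t i = \<omega>' t i" for t
  proof (induction t rule: less_induct)
    case (less t)
    then have "sig \<omega> t = sig \<omega>' t"
      using sig_causal by blast
    show ?case
    proof
      fix i
      show "\<omega> t i = \<omega>' t i"
        using same_align[of t i] sig_values[of t] \<open>sig \<omega> t = sig \<omega>' t\<close>
        by (cases "i \<in> B") (auto simp: align_def)
    qed
  qed
  then show "\<omega> = \<omega>'"
    by (auto simp: fun_eq_iff)
qed

lemma map_pmf_align:
  assumes "admissible_adversary n B sig badX"
  shows "map_pmf (align B sig) (pmf_of_set (Omega n T)) = pmf_of_set (Omega n T)"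
proof -
  have "align B sig ` Omega n T = Omega n T"
    using align_in_Omega[OF assms] inj_on_align[OF assms]
    by (intro endo_inj_surj finite_Omega) auto
  then show ?thesis
    using inj_on_align[OF assms] finite_Omega Omega_nonempty
    by (simp add: map_pmf_of_set_inj)
qed

lemma sum_le_diagonal_plus_off_diagonal:
  fixes a :: "'a \<Rightarrow> 'a \<Rightarrow> 'b::linordered_idom"
  assumes "finite A" and "\<And>k. k \<in> A \<Longrightarrow> a k k = d"
    and "\<And>k l. k \<in> A \<Longrightarrow> l \<in> A \<Longrightarrow> k \<noteq> l \<Longrightarrow> a k l \<le> M"
  shows "(\<Sum>k\<in>A. \<Sum>l\<in>A. a k l) \<le> of_nat (card A) * d + of_nat (card A) * (of_nat (card A) - 1) * M"
proof -
  have row: "(\<Sum>l\<in>A. a k l) \<le> d + (of_nat (card A) - 1) * M" if "k \<in> A" for k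
  proof -
    have "(\<Sum>l\<in>A. a k l) = a k k + (\<Sum>l\<in>A - {k}. a k l)"
      using that assms(1) by (simp add: sum.remove)
    also have "(\<Sum>l\<in>A - {k}. a k l) \<le> (\<Sum>l\<in>A - {k}. M)"
      using that by (intro sum_mono assms(3)) auto
    also have "\<dots> = (of_nat (card A) - 1) * M"
    proof -
      have "1 \<le> card A"
        using that assms(1) card_0_eq by fastforce
      then show ?thesis
        using that assms(1) by (simp add: of_nat_diff)
    qed
    finally show ?thesis
      using assms(2) that by simp
  qed
  have "(\<Sum>k\<in>A. \<Sum>l\<in>A. a k l) \<le> (\<Sum>k\<in>A. d + (of_nat (card A) - 1) * M)"
    using row by (rule sum_mono)
  then show ?thesis
    by (simp add: algebra_simps)
qed

lemma ip_self_bad: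
  assumes "admissible_adversary n B sig badX" and "k \<in> B"
  shows "ip T B badX \<omega> k k = T"
proof -
  have "badX \<omega> t k \<in> {-1, 1}" for t
    using assms(1) by (simp add: admissible_adversary_def)
  then have "badX \<omega> t k * badX \<omega> t k = 1" for t
    by (auto simp: square_eq_1_iff)
  then show ?thesis
    using assms(2) by (simp add: ip_def play_def)
qed

lemma sum_play_eq:
  assumes "B \<subseteq> {..<n}"
  shows "(\<Sum>i<n. play B badX \<omega> t i) = (\<Sum>i\<in>{..<n} - B. \<omega> t i) + (\<Sum>k\<in>B. badX \<omega> t k)"
proof -
  have "(\<Sum>i<n. play B badX \<omega> t i) = (\<Sum>i\<in>{..<n} - B. play B badX \<omega> t i) + (\<Sum>k\<in>B. play B badX \<omega> t k)"
    using assms by (intro sum.subset_diff) auto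
  then show ?thesis
    by (simp add: play_def)
qed

lemma sum_sq_bad_eq_sum_ip:
  "(\<Sum>t<T. (\<Sum>k\<in>B. badX \<omega> t k)\<^sup>2) = (\<Sum>k\<in>B. \<Sum>l\<in>B. ip T B badX \<omega> k l)"
proof -
  have "(\<Sum>t<T. (\<Sum>k\<in>B. badX \<omega> t k)\<^sup>2) = (\<Sum>t<T. \<Sum>k\<in>B. \<Sum>l\<in>B. badX \<omega> t k * badX \<omega> t l)"
    by (simp add: power2_eq_square sum_product)
  also have "\<dots> = (\<Sum>k\<in>B. \<Sum>l\<in>B. \<Sum>t<T. badX \<omega> t k * badX \<omega> t l)"
    by (simp only: sum.swap[of _ "{..<T}"] sum.swap[of _ "{..<T}" B])
  also have "\<dots> = (\<Sum>k\<in>B. \<Sum>l\<in>B. ip T B badX \<omega> k l)"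
    by (simp add: ip_def play_def)
  finally show ?thesis .
qed

lemma sum_deficit_align_le_if_survives:
  fixes M :: int
  assumes adm: "admissible_adversary n B sig badX" and B: "B \<subseteq> {..<n}"
    and surv: "survives n T B sig badX \<omega>"
    and max: "\<forall>k<n. \<forall>l<n. k \<noteq> l \<longrightarrow> ip T B badX \<omega> k l \<le> M"
  shows "(\<Sum>t<T. deficit (\<Sum>i\<in>{..<n} - B. align B sig \<omega> t i))
           \<le> 2 * (int (card B) * int T + int (card B) * (int (card B) - 1) * M)"
proof -
  define R where "R t = (\<Sum>k\<in>B. badX \<omega> t k)" for t
  have round: "deficit (\<Sum>i\<in>{..<n} - B. align B sig \<omega> t i) \<le> 2 * (R t)\<^sup>2" if "t < T" for t
  proof -
    have "sgnp ((\<Sum>i\<in>{..<n} - B. \<omega> t i) + R t) = sig \<omega> t"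
      using surv that sum_play_eq[OF B] by (simp add: survives_def R_def)
    moreover have "sig \<omega> t \<in> {-1, 1}"
      using adm by (simp add: admissible_adversary_def)
    moreover have "(\<Sum>i\<in>{..<n} - B. align B sig \<omega> t i) = sig \<omega> t * (\<Sum>i\<in>{..<n} - B. \<omega> t i)"
      by (simp add: align_def sum_distrib_left)
    ultimately show ?thesis
      using deficit_aligned_le[of "sig \<omega> t" "\<Sum>i\<in>{..<n} - B. \<omega> t i" "R t"] by simp
  qed
  have "(\<Sum>t<T. deficit (\<Sum>i\<in>{..<n} - B. align B sig \<omega> t i)) \<le> 2 * (\<Sum>t<T. (R t)\<^sup>2)"
    unfolding sum_distrib_left using round by (intro sum_mono) simp
  also have "(\<Sum>t<T. (R t)\<^sup>2) = (\<Sum>k\<in>B. \<Sum>l\<in>B. ip T B badX \<omega> k l)"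
    unfolding R_def by (rule sum_sq_bad_eq_sum_ip)
  also have "\<dots> \<le> int (card B) * int T + int (card B) * (int (card B) - 1) * M"
  proof (rule sum_le_diagonal_plus_off_diagonal)
    show "finite B"
      using B finite_subset by blast
    show "ip T B badX \<omega> k l \<le> M" if "k \<in> B" "l \<in> B" "k \<noteq> l" for k l
      using max that B by blast
  qed (simp add: ip_self_bad[OF adm])
  finally show ?thesis by simp
qed

lemma prob_sum_deficit_align_le:
  fixes x :: real
  assumes adm: "admissible_adversary n B sig badX"
    and "T > 0" and "{..<n} - B \<noteq> {}" and "x \<ge> 0"
  shows "measure (measure_pmf (pmf_of_set (Omega n T)))
           {\<omega>. (\<Sum>t<T. real_of_int (deficit (\<Sum>i\<in>{..<n} - B. align B sig \<omega> t i)))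
                 \<le> real T * card ({..<n} - B) - x}
         \<le> exp (- x\<^sup>2 / (2 * real T * real (card ({..<n} - B)) ^ 4))"
proof -
  let ?G = "{..<n} - B"
  let ?g = "real (card ?G)"
  let ?h = "\<lambda>v. real_of_int (deficit (\<Sum>i\<in>?G. v i))"
  let ?P = "pmf_of_set (Omega n T)"
  have "?g > 0"
    using assms(3) by (simp add: card_gt_0_iff)
  have "measure ?P {\<omega>. (\<Sum>t<T. ?h (align B sig \<omega> t)) \<le> real T * ?g - x}
      = measure (map_pmf (align B sig) ?P) {\<omega>. (\<Sum>t<T. ?h (\<omega> t)) \<le> real T * ?g - x}"
    by (simp only: measure_map_pmf vimage_Collect_eq)
  also have "\<dots> = measure (Pi_pmf {..<T} (\<lambda>_. 0) (\<lambda>_. pmf_of_set (sign_cube n)))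
      {\<omega>. (\<Sum>t<T. ?h (\<omega> t)) \<le> real T * measure_pmf.expectation (pmf_of_set (sign_cube n)) ?h - x}"
    unfolding map_pmf_align[OF adm] by (simp add: pmf_of_set_Omega expectation_deficit_sign_cube)
  also have "\<dots> \<le> exp (-2 * x\<^sup>2 / (real T * (2 * ?g\<^sup>2 - 0)\<^sup>2))"
  proof (rule Hoeffding_Pi_pmf_le)
    fix v assume "v \<in> set_pmf (pmf_of_set (sign_cube n))"
    then have "deficit (\<Sum>i\<in>?G. v i) \<in> {0 .. 2 * (int (card ?G))\<^sup>2}"
      using deficit_sum_sign_cube_bounds finite_sign_cube sign_cube_nonempty by simp
    then have "?h v \<in> {0 .. real_of_int (2 * (int (card ?G))\<^sup>2)}"
      by (simp only: atLeastAtMost_iff of_int_le_iff of_int_0_le_iff)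
    then show "?h v \<in> {0 .. 2 * ?g\<^sup>2}"
      by simp
  qed (use assms \<open>?g > 0\<close> in auto)
  also have "\<dots> = exp (- x\<^sup>2 / (2 * real T * ?g ^ 4))"
    by (simp add: power2_eq_square power4_eq_xxxx)
  finally show ?thesis
    by simp
qed

lemma prob_sum_mult_ge:
  fixes x :: real
  assumes "T > 0" and "i < n" "j < n" "i \<noteq> j" and "x \<ge> 0"
  shows "measure (measure_pmf (pmf_of_set (Omega n T)))
           {\<omega>. x \<le> (\<Sum>t<T. real_of_int (\<omega> t i * \<omega> t j))}
         \<le> exp (- x\<^sup>2 / (2 * real T))"
proof -
  let ?h = "\<lambda>v. real_of_int (v i * v j)"
  have "measure (measure_pmf (pmf_of_set (Omega n T))) {\<omega>. x \<le> (\<Sum>t<T. ?h (\<omega> t))}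
      = measure (Pi_pmf {..<T} (\<lambda>_. 0) (\<lambda>_. pmf_of_set (sign_cube n)))
          {\<omega>. (\<Sum>t<T. ?h (\<omega> t)) \<ge> real T * measure_pmf.expectation (pmf_of_set (sign_cube n)) ?h + x}"
    using expectation_sign_cube_mult[OF assms(2-4)] by (simp add: pmf_of_set_Omega)
  also have "\<dots> \<le> exp (-2 * x\<^sup>2 / (real T * (1 - (-1))\<^sup>2))"
  proof (rule Hoeffding_Pi_pmf_ge)
    fix v assume "v \<in> set_pmf (pmf_of_set (sign_cube n))"
    then have "v i \<in> {-1, 1}" and "v j \<in> {-1, 1}"
      using sign_cube_values assms(2,3) finite_sign_cube sign_cube_nonempty by auto
    then show "?h v \<in> {-1..1}"
      by auto
  qed (use assms in auto)
  finally show ?thesis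
    by simp
qed

lemma survives_good_pair_max_subset:
  fixes D :: real
  assumes adm: "admissible_adversary n B sig badX" and B: "B \<subseteq> {..<n}"
  defines "f \<equiv> real (card B)"
  shows "{\<omega>. survives n T B sig badX \<omega> \<and>
             (\<exists>i\<in>{..<n} - B. \<exists>j\<in>{..<n} - B. i \<noteq> j \<and>
                (\<forall>k<n. \<forall>l<n. k \<noteq> l \<longrightarrow> ip T B badX \<omega> k l \<le> ip T B badX \<omega> i j))}
         \<subseteq> {\<omega>. (\<Sum>t<T. real_of_int (deficit (\<Sum>i\<in>{..<n} - B. align B sig \<omega> t i)))
                 \<le> 2 * (f * T + f * (f - 1) * D)}
           \<union> (\<Union>(i, j)\<in>{(i, j). i < n \<and> j < n \<and> i \<noteq> j}.
                {\<omega>. D \<le> (\<Sum>t<T. real_of_int (\<omega> t i * \<omega> t j))})"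
    (is "_ \<subseteq> ?deficit_small \<union> ?good_pair_large")
proof
  fix \<omega> assume "\<omega> \<in> {\<omega>. survives n T B sig badX \<omega> \<and>
             (\<exists>i\<in>{..<n} - B. \<exists>j\<in>{..<n} - B. i \<noteq> j \<and>
                (\<forall>k<n. \<forall>l<n. k \<noteq> l \<longrightarrow> ip T B badX \<omega> k l \<le> ip T B badX \<omega> i j))}"
  then obtain i j where surv: "survives n T B sig badX \<omega>"
    and ij: "i \<in> {..<n} - B" "j \<in> {..<n} - B" "i \<noteq> j"
    and max: "\<forall>k<n. \<forall>l<n. k \<noteq> l \<longrightarrow> ip T B badX \<omega> k l \<le> ip T B badX \<omega> i j"
    by blast
  define M where "M = ip T B badX \<omega> i j"
  have M_eq: "real_of_int M = (\<Sum>t<T. real_of_int (\<omega> t i * \<omega> t j))"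
    using ij by (simp add: M_def ip_def play_def)
  show "\<omega> \<in> ?deficit_small \<union> ?good_pair_large"
  proof (cases "D \<le> real_of_int M")
    case True
    then show ?thesis
      using ij M_eq by auto
  next
    case False
    have "f * (f - 1) \<ge> 0"
      by (cases "card B") (auto simp: f_def)
    then have "f * (f - 1) * real_of_int M \<le> f * (f - 1) * D"
      using False by (intro mult_left_mono) auto
    moreover have "(\<Sum>t<T. real_of_int (deficit (\<Sum>i\<in>{..<n} - B. align B sig \<omega> t i)))
                   \<le> 2 * (f * T + f * (f - 1) * real_of_int M)"
    proof -
      have "(\<Sum>t<T. deficit (\<Sum>i\<in>{..<n} - B. align B sig \<omega> t i))
            \<le> 2 * (int (card B) * int T + int (card B) * (int (card B) - 1) * M)"
        using sum_deficit_align_le_if_survives[OF adm B surv] max by (simp add: M_def)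
      then have "real_of_int (\<Sum>t<T. deficit (\<Sum>i\<in>{..<n} - B. align B sig \<omega> t i))
            \<le> real_of_int (2 * (int (card B) * int T + int (card B) * (int (card B) - 1) * M))"
        by (simp only: of_int_le_iff)
      then show ?thesis
        by (simp add: f_def)
    qed
    ultimately show ?thesis
      by auto
  qed
qed

lemma prob_survives_good_pair_max_le:
  fixes D x :: real
  assumes adm: "admissible_adversary n B sig badX" and B: "B \<subseteq> {..<n}"
    and "T > 0" and "{..<n} - B \<noteq> {}" and "D \<ge> 0" and "x \<ge> 0"
    and x: "x = real T * card ({..<n} - B) - 2 * (card B * real T + card B * (real (card B) - 1) * D)"
  shows "measure (measure_pmf (pmf_of_set (Omega n T)))
           {\<omega>. survives n T B sig badX \<omega> \<and>
             (\<exists>i\<in>{..<n} - B. \<exists>j\<in>{..<n} - B. i \<noteq> j \<and>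
                (\<forall>k<n. \<forall>l<n. k \<noteq> l \<longrightarrow> ip T B badX \<omega> k l \<le> ip T B badX \<omega> i j))}
         \<le> exp (- x\<^sup>2 / (2 * real T * real (card ({..<n} - B)) ^ 4)) + real n ^ 2 * exp (- D\<^sup>2 / (2 * real T))"
    (is "measure ?P ?E \<le> _")
proof -
  let ?deficit_small = "{\<omega>. (\<Sum>t<T. real_of_int (deficit (\<Sum>i\<in>{..<n} - B. align B sig \<omega> t i)))
                           \<le> real T * card ({..<n} - B) - x}"
  let ?pairs = "{(i, j). i < n \<and> j < n \<and> i \<noteq> j}"
  let ?A = "\<lambda>(i, j). {\<omega>. D \<le> (\<Sum>t<T. real_of_int (\<omega> t i * \<omega> t j))}"
  have "card ?pairs \<le> card ({..<n} \<times> {..<n})"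
    by (intro card_mono) auto
  then have card_pairs: "real (card ?pairs) \<le> real n ^ 2"
    by (simp add: power2_eq_square flip: of_nat_mult)
  have "finite ?pairs"
    by (rule finite_subset[of _ "{..<n} \<times> {..<n}"]) auto
  have "real T * card ({..<n} - B) - x = 2 * (card B * real T + card B * (real (card B) - 1) * D)"
    using x by simp
  then have "?E \<subseteq> ?deficit_small \<union> (\<Union>p\<in>?pairs. ?A p)"
    using survives_good_pair_max_subset[OF adm B, of T D] by simp
  then have "measure ?P ?E \<le> measure ?P (?deficit_small \<union> (\<Union>p\<in>?pairs. ?A p))"
    by (intro measure_pmf.finite_measure_mono) auto
  also have "\<dots> \<le> measure ?P ?deficit_small + measure ?P (\<Union>p\<in>?pairs. ?A p)"
    by (rule measure_Un_le) simp_all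
  also have "measure ?P (\<Union>p\<in>?pairs. ?A p) \<le> (\<Sum>p\<in>?pairs. measure ?P (?A p))"
    by (rule measure_pmf.finite_measure_subadditive_finite[OF \<open>finite ?pairs\<close>]) auto
  also have "measure ?P ?deficit_small + (\<Sum>p\<in>?pairs. measure ?P (?A p))
      \<le> exp (- x\<^sup>2 / (2 * real T * real (card ({..<n} - B)) ^ 4)) + (\<Sum>p\<in>?pairs. exp (- D\<^sup>2 / (2 * real T)))"
    using prob_sum_deficit_align_le[OF adm assms(3,4,6)] prob_sum_mult_ge[OF assms(3) _ _ _ assms(5)]
    by (intro add_mono sum_mono) auto
  also have "(\<Sum>p\<in>?pairs. exp (- D\<^sup>2 / (2 * real T))) \<le> real n ^ 2 * exp (- D\<^sup>2 / (2 * real T))"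
    using card_pairs by (simp add: mult_right_mono)
  finally show ?thesis
    by simp
qed

lemma deficit_threshold_margin:
  fixes n f \<epsilon> T D :: real
  assumes "n > 0" and "0 < \<epsilon>" "\<epsilon> \<le> 1" and f: "f = n / (3 + \<epsilon>)"
    and "0 \<le> D" and D: "D \<le> \<epsilon> * T / (8 * n)"
  shows "(n - f)\<^sup>2 * D \<le> T * (n - f) - 2 * (f * T + f * (f - 1) * D)"
proof -
  have "0 \<le> f"
    using assms by (simp add: f)
  have "f \<le> n / 3"
    unfolding f using assms by (intro divide_left_mono) auto
  have "0 \<le> \<epsilon> * T / (8 * n)"
    using \<open>0 \<le> D\<close> D by linarith
  then have "T \<ge> 0"
    using assms by (simp add: zero_le_divide_iff zero_le_mult_iff)
  have "n - 3 * f = n * \<epsilon> / (3 + \<epsilon>)"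
    using assms by (simp add: f field_simps)
  also have "\<dots> \<ge> n * \<epsilon> / 4"
    using assms by (intro divide_left_mono) auto
  finally have "T * (n - 3 * f) \<ge> T * (n * \<epsilon> / 4)"
    using \<open>T \<ge> 0\<close> by (intro mult_left_mono)
  also have "T * (n * \<epsilon> / 4) = 2 * n\<^sup>2 * (\<epsilon> * T / (8 * n))"
    using assms by (simp add: field_simps power2_eq_square)
  also have "\<dots> \<ge> 2 * n\<^sup>2 * D"
    using D by (intro mult_left_mono) auto
  finally have main: "T * (n - 3 * f) \<ge> 2 * n\<^sup>2 * D" .
  have "(n - f)\<^sup>2 \<le> n\<^sup>2"
    using \<open>0 \<le> f\<close> \<open>f \<le> n / 3\<close> by (intro power_mono) auto
  moreover have "f\<^sup>2 \<le> n\<^sup>2 / 9"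
    using power_mono[OF \<open>f \<le> n / 3\<close> \<open>0 \<le> f\<close>, of 2] by (simp add: power_divide)
  ultimately have "(n - f)\<^sup>2 + 2 * f\<^sup>2 \<le> 2 * n\<^sup>2"
    using zero_le_power2[of n] by linarith
  then have "((n - f)\<^sup>2 + 2 * f\<^sup>2) * D \<le> (2 * n\<^sup>2) * D"
    using \<open>0 \<le> D\<close> by (rule mult_right_mono)
  then have "(n - f)\<^sup>2 * D + 2 * (f\<^sup>2 * D) \<le> 2 * n\<^sup>2 * D"
    by (simp add: distrib_right)
  moreover have "f * (f - 1) * D \<le> f\<^sup>2 * D"
    using \<open>0 \<le> f\<close> \<open>0 \<le> D\<close> by (intro mult_right_mono) (auto simp: power2_eq_square algebra_simps)
  moreover have "T * (n - f) - 2 * (f * T + f * (f - 1) * D) = T * (n - 3 * f) - 2 * (f * (f - 1) * D)"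
    by (simp add: algebra_simps)
  ultimately show ?thesis
    using main by linarith
qed

lemma one_plus_sq_mult_powr_le:
  fixes n c :: real
  assumes "n \<ge> 2"
  shows "(1 + n\<^sup>2) * n powr (- (c + 3)) \<le> n powr (- c)"
proof -
  have "1 + n\<^sup>2 \<le> n ^ 3"
  proof -
    have "n ^ 3 = n * n\<^sup>2"
      by (simp add: power2_eq_square power3_eq_cube)
    also have "\<dots> \<ge> 2 * n\<^sup>2"
      using assms by (intro mult_right_mono) auto
    moreover have "1 \<le> n\<^sup>2"
      using assms by (intro one_le_power) auto
    ultimately show ?thesis
      by linarith
  qed
  then have "(1 + n\<^sup>2) / n ^ 3 \<le> 1"
    using assms by simp
  have "n powr (- (c + 3)) = n powr (- c) / n ^ 3"
    using assms by (simp add: powr_diff powr_realpow' diff_conv_add_uminus[symmetric])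
  then have "(1 + n\<^sup>2) * n powr (- (c + 3)) = n powr (- c) * ((1 + n\<^sup>2) / n ^ 3)"
    by simp
  also have "\<dots> \<le> n powr (- c)"
    using \<open>(1 + n\<^sup>2) / n ^ 3 \<le> 1\<close> by (intro mult_left_le) auto
  finally show ?thesis .
qed

lemma sqrt_two_mult_le:
  fixes n \<epsilon> T L :: real
  assumes "n > 0" "\<epsilon> > 0" "T \<ge> 0" and large: "128 * n\<^sup>2 * L / \<epsilon>\<^sup>2 \<le> T"
  shows "sqrt (2 * T * L) \<le> \<epsilon> * T / (8 * n)"
proof (rule real_le_lsqrt)
  show "0 \<le> \<epsilon> * T / (8 * n)"
    using assms by simp
  have "128 * n\<^sup>2 * L \<le> \<epsilon>\<^sup>2 * T"
    using large assms by (simp add: field_simps)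
  then have "T * (128 * n\<^sup>2 * L) \<le> T * (\<epsilon>\<^sup>2 * T)"
    using assms by (intro mult_left_mono) auto
  then show "2 * T * L \<le> (\<epsilon> * T / (8 * n))\<^sup>2"
    using assms by (simp add: field_simps power2_eq_square)
qed

lemma tail_bounds_le_powr:
  fixes n c \<epsilon> f T D x :: real
  assumes "n \<ge> 2" and "c > 0" and "0 < \<epsilon>" "\<epsilon> \<le> 1" and f: "f = n / (3 + \<epsilon>)"
    and T: "T \<ge> 128 * (c + 3) * (n / \<epsilon>)\<^sup>2 * ln n"
    and D: "D = sqrt (2 * T * ((c + 3) * ln n))"
    and x: "x = T * (n - f) - 2 * (f * T + f * (f - 1) * D)"
  shows "T > 0" and "D \<ge> 0" and "x \<ge> 0"
    and "exp (- x\<^sup>2 / (2 * T * (n - f) ^ 4)) + n\<^sup>2 * exp (- D\<^sup>2 / (2 * T)) \<le> n powr (- c)"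
proof -
  let ?L = "(c + 3) * ln n"
  have "?L > 0"
    using assms by simp
  have "0 < 128 * (c + 3) * (n / \<epsilon>)\<^sup>2 * ln n"
    using assms by (intro mult_pos_pos) auto
  then show "T > 0"
    using T by linarith
  then show "D \<ge> 0"
    using \<open>?L > 0\<close> by (simp add: D)
  have D_sq: "D\<^sup>2 = 2 * T * ?L"
    using \<open>T > 0\<close> \<open>?L > 0\<close> by (simp add: D)
  have "f < n"
    using assms by (simp add: f divide_less_eq)
  have "128 * n\<^sup>2 * ?L / \<epsilon>\<^sup>2 \<le> T"
    using T by (simp add: power_divide mult_ac)
  then have "D \<le> \<epsilon> * T / (8 * n)"
    unfolding D using assms \<open>T > 0\<close> by (intro sqrt_two_mult_le) auto
  then have "(n - f)\<^sup>2 * D \<le> x"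
    unfolding x using assms f \<open>D \<ge> 0\<close> by (intro deficit_threshold_margin) auto
  moreover have "0 \<le> (n - f)\<^sup>2 * D"
    using \<open>D \<ge> 0\<close> by simp
  ultimately have "(n - f) ^ 4 * D\<^sup>2 \<le> x\<^sup>2" and "x \<ge> 0"
    using power_mono[of "(n - f)\<^sup>2 * D" x 2] by (auto simp: power_mult_distrib simp flip: power_mult)
  then show "x \<ge> 0"
    by blast
  from \<open>(n - f) ^ 4 * D\<^sup>2 \<le> x\<^sup>2\<close> have "D\<^sup>2 / (2 * T) \<le> x\<^sup>2 / (2 * T * (n - f) ^ 4)"
    using \<open>T > 0\<close> \<open>f < n\<close> by (simp add: field_simps)
  then have exp_le: "exp (- x\<^sup>2 / (2 * T * (n - f) ^ 4)) \<le> exp (- D\<^sup>2 / (2 * T))"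
    by simp
  have "- D\<^sup>2 / (2 * T) = - ((c + 3) * ln n)"
    using D_sq \<open>T > 0\<close> by simp
  then have exp_eq: "exp (- D\<^sup>2 / (2 * T)) = n powr (- (c + 3))"
    using assms unfolding powr_def by (simp add: algebra_simps)
  have "exp (- x\<^sup>2 / (2 * T * (n - f) ^ 4)) + n\<^sup>2 * exp (- D\<^sup>2 / (2 * T)) \<le> (1 + n\<^sup>2) * n powr (- (c + 3))"
    using exp_le unfolding exp_eq by (simp add: distrib_right)
  also have "\<dots> \<le> n powr (- c)"
    using assms by (intro one_plus_sq_mult_powr_le)
  finally show "exp (- x\<^sup>2 / (2 * T * (n - f) ^ 4)) + n\<^sup>2 * exp (- D\<^sup>2 / (2 * T)) \<le> n powr (- c)" .
qed

lemma prob_survives_good_pair_max_le_powr: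
  fixes c \<epsilon> :: real and n T :: nat
  assumes "c > 0" and "n \<ge> 2" and B: "B \<subseteq> {..<n}" and "0 < \<epsilon>" "\<epsilon> \<le> 1"
    and card_B: "real (card B) = real n / (3 + \<epsilon>)" and adm: "admissible_adversary n B sig badX"
    and T: "real T \<ge> 128 * (c + 3) * (real n / \<epsilon>)\<^sup>2 * ln (real n)"
  shows "measure (measure_pmf (pmf_of_set (Omega n T)))
           {\<omega>. survives n T B sig badX \<omega> \<and>
             (\<exists>i\<in>{..<n} - B. \<exists>j\<in>{..<n} - B. i \<noteq> j \<and>
                (\<forall>k<n. \<forall>l<n. k \<noteq> l \<longrightarrow> ip T B badX \<omega> k l \<le> ip T B badX \<omega> i j))}
         \<le> real n powr (- c)"
    (is "measure ?P ?E \<le> _")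
proof -
  define f where "f = real (card B)"
  define D where "D = sqrt (2 * real T * ((c + 3) * ln (real n)))"
  define x where "x = real T * (real n - f) - 2 * (f * real T + f * (f - 1) * D)"
  have f: "f = real n / (3 + \<epsilon>)"
    using card_B by (simp add: f_def)
  have "real n \<ge> 2"
    using \<open>n \<ge> 2\<close> by simp
  note tails = tail_bounds_le_powr[OF this \<open>c > 0\<close> \<open>0 < \<epsilon>\<close> \<open>\<epsilon> \<le> 1\<close> f T D_def x_def]
  have "card B \<le> n"
    using card_mono[OF _ B] by simp
  then have card_good: "real (card ({..<n} - B)) = real n - f"
    using B by (simp add: f_def card_Diff_subset finite_subset of_nat_diff)
  moreover have "f < real n"
    using assms by (simp add: f divide_less_eq)
  ultimately have "{..<n} - B \<noteq> {}"
    by (metis card.empty diff_gt_0_iff_gt of_nat_0 order_less_irrefl)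
  have "x = real T * card ({..<n} - B) - 2 * (card B * real T + card B * (real (card B) - 1) * D)"
    by (simp add: x_def card_good f_def)
  from prob_survives_good_pair_max_le[OF adm B _ \<open>{..<n} - B \<noteq> {}\<close> tails(2,3) this] tails(1)
  have "measure ?P ?E \<le> exp (- x\<^sup>2 / (2 * real T * (real n - f) ^ 4)) + (real n)\<^sup>2 * exp (- D\<^sup>2 / (2 * real T))"
    by (simp only: card_good of_nat_0_less_iff)
  with tails(4) show ?thesis
    by simp
qed

theorem lemma2:
  "\<forall>c>0. \<exists>\<epsilon>0>0. \<exists>C>0. \<exists>K::nat. \<exists>N::nat. \<forall>n\<ge>N. \<forall>(B::nat set) (\<epsilon>::real) sig badX.
     B \<subseteq> {..<n} \<and> 0 < \<epsilon> \<and> \<epsilon> \<le> \<epsilon>0 \<and> real (card B) = real n / (3 + \<epsilon>) \<and>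
     admissible_adversary n B sig badX \<longrightarrow>
     (let T = nat \<lceil>C * (real n / \<epsilon>)^2 * (ln (real n))^K\<rceil> in
      measure (measure_pmf (pmf_of_set (Omega n T)))
        {\<omega>. survives n T B sig badX \<omega> \<and>
             (\<exists>i\<in>{..<n} - B. \<exists>j\<in>{..<n} - B. i \<noteq> j \<and>
                (\<forall>k<n. \<forall>l<n. k \<noteq> l \<longrightarrow> ip T B badX \<omega> k l \<le> ip T B badX \<omega> i j))}
      \<le> real n powr (- c))"
  (is "\<forall>c>0. \<exists>\<epsilon>0>0. \<exists>C>0. \<exists>K. \<exists>N. ?bound c \<epsilon>0 C K N")
proof (intro allI impI)
  fix c :: real
  assume "c > 0"
  then have "?bound c 1 (128 * (c + 3)) 1 2"
    unfolding Let_def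
    by (intro allI impI prob_survives_good_pair_max_le_powr) (auto intro: real_nat_ceiling_ge)
  moreover have "0 < 128 * (c + 3)"
    using \<open>c > 0\<close> by simp
  ultimately show "\<exists>\<epsilon>0>0. \<exists>C>0. \<exists>K. \<exists>N. ?bound c \<epsilon>0 C K N"
    using zero_less_one by blast
qed

end
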